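(* Let $m,n\ge 1$, $I=\{1,\dots,m\}$, and consider the problem $$\text{(P)}\qquad \max\ z(\boldsymbol{x}) := \sum_{i=1}^m\sum_{j=1}^n v_{ij}x_{ij}\quad\text{s.t.}\quad \sum_{j=1}^n \bar{w}_{ij}x_{ij}\le 1\ (i\in I),\quad \boldsymbol{x}\in X\subseteq\{0,1\}^{m\times n},$$ where, for each $i\in I$, $\bar{\boldsymbol{w}}_i=(\bar w_{i1},\dots,\bar w_{in})\in W_i$, with $W_i\subseteq[0,1]^n$ a set given by $[0,1]^n$ intersected with finitely many linear inequalities, and $W:=\prod_{i\in I}W_i$. For each $i\in I$, let $X_i$ be the projection of $X$ onto the variables $\boldsymbol{x}_i=(x_{i1},\dots,x_{in})$, and let $S^+_i, S^-_i\subseteq X_i$ be finite sets such that every $\boldsymbol{\sigma}^+\in S^+_i$ satisfies $\bar{\boldsymbol{w}}_i\cdot\boldsymbol{\sigma}^+\le 1$ and every $\boldsymbol{\sigma}^-\in S^-_i$ satisfies $\bar{\boldsymbol{w}}_i\cdot\boldsymbol{\sigma}^->1$. Consider the problem, in variables $\boldsymbol{x}$ and $\boldsymbol{w}=(w_{ij})$, $$\text{(B)}\qquad \max\ z(\boldsymbol{x})\quad \text{s.t.}\quad \begin{cases}\sum_{j=1}^n w_{ij}x_{ij}\le 1, & i\in I,\\ \sum_{j=1}^n w_{ij}\sigma^+_j\le 1, & \boldsymbol{\sigma}^+\in S^+_i,\ i\in I,\\ \sum_{j=1}^n w_{ij}\sigma^-_j\ge 1, & \boldsymbol{\sigma}^-\in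 S^-_i,\ i\in I,\\ \sum_{j=1}^n x_{ij}\sigma^-_j\le \sum_{j=1}^n\sigma^-_j-1, & \boldsymbol{\sigma}^-\in S^-_i,\ i\in I,\\ \boldsymbol{x}\in X,\quad \boldsymbol{w}\in W.\end{cases}$$ Then for any optimal solution $(\boldsymbol{x}^*,\boldsymbol{w}^* )$ of (B) and any optimal solution $\boldsymbol{x}^{\circledast}$ of (P), one has $z(\boldsymbol{x}^* )\ge z(\boldsymbol{x}^{\circledast})$.
   Context: In the paper's setting, the weights $\bar{\boldsymbol{w}}_i$ are unknown and $S^+_i$, $S^-_i$ are the sets of sub-solutions $\boldsymbol{x}_i\in X_i$ that have been labeled by a membership oracle as satisfying, respectively violating, the $i$-th constraint $\bar{\boldsymbol{w}}_i\cdot\boldsymbol{x}_i\le 1$. *)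

theory Defs
  imports "HOL-Analysis.Analysis"
begin

text \<open>Rows indexed by the finite type 'm (I = {1..m}), columns by the finite type 'n.
  A solution x is a real matrix x :: real^'n^'m with row x$i = x_i.\<close>

definition binary_mats :: "(real^'n^'m) set" where
  "binary_mats = {x. \<forall>i j. x$i$j \<in> {0,1}}"

definition objective :: "real^'n^'m \<Rightarrow> real^'n^'m \<Rightarrow> real" where
  "objective v x = (\<Sum>i\<in>UNIV. \<Sum>j\<in>UNIV. v$i$j * x$i$j)"

definition polyhedral_box :: "(real^'n) set \<Rightarrow> bool" where
  "polyhedral_box Wi \<longleftrightarrow> (\<exists>C :: ((real^'n) \<times> real) set. finite C \<and>
     Wi = {w. (\<forall>j. 0 \<le> w$j \<and> w$j \<le> 1) \<and> (\<forall>(a,b)\<in>C. a \<bullet> w \<le> b)})"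

definition proj_row :: "(real^'n^'m) set \<Rightarrow> 'm \<Rightarrow> (real^'n) set" where
  "proj_row X i = (\<lambda>x. x$i) ` X"

definition feasible_P :: "(real^'n^'m) set \<Rightarrow> real^'n^'m \<Rightarrow> real^'n^'m \<Rightarrow> bool" where
  "feasible_P X wbar x \<longleftrightarrow> x \<in> X \<and> (\<forall>i. wbar$i \<bullet> x$i \<le> 1)"

definition optimal_P :: "real^'n^'m \<Rightarrow> (real^'n^'m) set \<Rightarrow> real^'n^'m \<Rightarrow> real^'n^'m \<Rightarrow> bool" where
  "optimal_P v X wbar x \<longleftrightarrow> feasible_P X wbar x \<and>
     (\<forall>y. feasible_P X wbar y \<longrightarrow> objective v y \<le> objective v x)"

definition feasible_B :: "(real^'n^'m) set \<Rightarrow> ('m \<Rightarrow> (real^'n) set) \<Rightarrow>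
    ('m \<Rightarrow> (real^'n) set) \<Rightarrow> ('m \<Rightarrow> (real^'n) set) \<Rightarrow> real^'n^'m \<Rightarrow> real^'n^'m \<Rightarrow> bool" where
  "feasible_B X W Splus Sminus x w \<longleftrightarrow>
     (\<forall>i. w$i \<bullet> x$i \<le> 1) \<and>
     (\<forall>i. \<forall>\<sigma>\<in>Splus i. w$i \<bullet> \<sigma> \<le> 1) \<and>
     (\<forall>i. \<forall>\<sigma>\<in>Sminus i. w$i \<bullet> \<sigma> \<ge> 1) \<and>
     (\<forall>i. \<forall>\<sigma>\<in>Sminus i. x$i \<bullet> \<sigma> \<le> (\<Sum>j\<in>UNIV. \<sigma>$j) - 1) \<and>
     x \<in> X \<and> (\<forall>i. w$i \<in> W i)"

definition optimal_B :: "real^'n^'m \<Rightarrow> (real^'n^'m) set \<Rightarrow> ('m \<Rightarrow> (real^'n) set) \<Rightarrow>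
    ('m \<Rightarrow> (real^'n) set) \<Rightarrow> ('m \<Rightarrow> (real^'n) set) \<Rightarrow> real^'n^'m \<Rightarrow> real^'n^'m \<Rightarrow> bool" where
  "optimal_B v X W Splus Sminus x w \<longleftrightarrow> feasible_B X W Splus Sminus x w \<and>
     (\<forall>y u. feasible_B X W Splus Sminus y u \<longrightarrow> objective v y \<le> objective v x)"

end

theory Submission
  imports Defs
begin

text \<open>The true weights turn (B) into a relaxation of (P): for every (P)-feasible x, the pair
  (x, wbar) is (B)-feasible. The oracle labels give the constraints on S^+ and S^-, and the
  no-good cut for a violating sub-solution \<sigma> is valid for x because, if x_i covered the support
  of \<sigma>, the nonnegative weights would give wbar_i . \<sigma> \<le> wbar_i . x_i \<le> 1 < wbar_i . \<sigma>.\<close>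

lemma inner_nonneg_left_mono:
  fixes w s x :: "real^'n"
  assumes "\<forall>j. 0 \<le> w$j" and "\<forall>j. s$j \<le> x$j"
  shows "w \<bullet> s \<le> w \<bullet> x"
  unfolding inner_vec_def inner_real_def
  using assms by (intro sum_mono mult_left_mono) auto

lemma binary_inner_le_sum_minus_one:
  fixes x s :: "real^'n"
  assumes x_bin: "\<forall>k. x$k \<in> {0,1}" and s_bin: "\<forall>k. s$k \<in> {0,1}"
    and "s$j = 1" and "x$j = 0"
  shows "x \<bullet> s \<le> (\<Sum>k\<in>UNIV. s$k) - 1"
proof -
  have nonneg: "0 \<le> s$k - x$k * s$k" for k
  proof -
    have "s$k = 0 \<or> s$k = 1" "x$k = 0 \<or> x$k = 1" using x_bin s_bin by auto
    then show ?thesis by auto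
  qed
  have "1 = s$j - x$j * s$j" using assms(3,4) by simp
  also have "\<dots> \<le> (\<Sum>k\<in>UNIV. s$k - x$k * s$k)"
    using nonneg by (intro member_le_sum) auto
  also have "\<dots> = (\<Sum>k\<in>UNIV. s$k) - x \<bullet> s"
    by (simp add: inner_vec_def sum_subtractf)
  finally show ?thesis by linarith
qed

lemma nogood_cut_valid:
  fixes w x s :: "real^'n"
  assumes x_bin: "\<forall>k. x$k \<in> {0,1}" and s_bin: "\<forall>k. s$k \<in> {0,1}"
    and w_nonneg: "\<forall>k. 0 \<le> w$k" and "w \<bullet> x \<le> 1" and "1 < w \<bullet> s"
  shows "x \<bullet> s \<le> (\<Sum>k\<in>UNIV. s$k) - 1"
proof -
  have "\<exists>j. s$j = 1 \<and> x$j = 0"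
  proof (rule ccontr)
    assume "\<nexists>j. s$j = 1 \<and> x$j = 0"
    have "s$j \<le> x$j" for j
    proof -
      have "s$j = 0 \<or> s$j = 1" "x$j = 0 \<or> x$j = 1" using x_bin s_bin by auto
      with \<open>\<nexists>j. s$j = 1 \<and> x$j = 0\<close> show ?thesis by auto
    qed
    then have "w \<bullet> s \<le> w \<bullet> x" using w_nonneg by (simp add: inner_nonneg_left_mono)
    with assms(4,5) show False by linarith
  qed
  then obtain j where "s$j = 1" "x$j = 0" by blast
  with x_bin s_bin show ?thesis by (rule binary_inner_le_sum_minus_one)
qed

lemma polyhedral_box_nonneg:
  assumes "polyhedral_box Wi" and "w \<in> Wi"
  shows "0 \<le> w$j"
  using assms unfolding polyhedral_box_def by auto

lemma proj_row_binary:
  assumes "X \<subseteq> binary_mats" and "\<sigma> \<in> proj_row X i"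
  shows "\<forall>j. \<sigma>$j \<in> {0,1}"
  using assms unfolding proj_row_def binary_mats_def by auto

lemma feasible_P_imp_feasible_B:
  assumes X_bin: "X \<subseteq> binary_mats"
    and W_poly: "\<forall>i. polyhedral_box (W i)"
    and wbar_W: "\<forall>i. wbar$i \<in> W i"
    and Sminus_sub: "\<forall>i. Sminus i \<subseteq> proj_row X i"
    and Splus_ok: "\<forall>i. \<forall>\<sigma>\<in>Splus i. wbar$i \<bullet> \<sigma> \<le> 1"
    and Sminus_ok: "\<forall>i. \<forall>\<sigma>\<in>Sminus i. wbar$i \<bullet> \<sigma> > 1"
    and feasP: "feasible_P X wbar x"
  shows "feasible_B X W Splus Sminus x wbar"
proof -
  have x_X: "x \<in> X" and x_fits: "\<forall>i. wbar$i \<bullet> x$i \<le> 1"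
    using feasP unfolding feasible_P_def by auto
  have "x$i \<bullet> \<sigma> \<le> (\<Sum>j\<in>UNIV. \<sigma>$j) - 1" if "\<sigma> \<in> Sminus i" for i \<sigma>
  proof (rule nogood_cut_valid)
    show "\<forall>j. x$i$j \<in> {0,1}" using X_bin x_X unfolding binary_mats_def by auto
    show "\<forall>j. \<sigma>$j \<in> {0,1}" using proj_row_binary[OF X_bin] Sminus_sub that by auto
    show "\<forall>j. 0 \<le> wbar$i$j" using polyhedral_box_nonneg W_poly wbar_W by blast
  qed (use x_fits Sminus_ok that in auto)
  then show ?thesis
    unfolding feasible_B_def
    using x_X x_fits wbar_W Splus_ok Sminus_ok by (auto intro: less_imp_le)
qed

theorem proposition1:
  fixes v wbar :: "real^'n^'m"
    and X :: "(real^'n^'m) set"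
    and W Splus Sminus :: "'m \<Rightarrow> (real^'n) set"
    and xs ws xo :: "real^'n^'m"
  assumes X_bin: "X \<subseteq> binary_mats"
    and W_poly: "\<forall>i. polyhedral_box (W i)"
    and wbar_W: "\<forall>i. wbar$i \<in> W i"
    and Splus_sub: "\<forall>i. Splus i \<subseteq> proj_row X i" and Splus_fin: "\<forall>i. finite (Splus i)"
    and Sminus_sub: "\<forall>i. Sminus i \<subseteq> proj_row X i" and Sminus_fin: "\<forall>i. finite (Sminus i)"
    and Splus_ok: "\<forall>i. \<forall>\<sigma>\<in>Splus i. wbar$i \<bullet> \<sigma> \<le> 1"
    and Sminus_ok: "\<forall>i. \<forall>\<sigma>\<in>Sminus i. wbar$i \<bullet> \<sigma> > 1"
    and optB: "optimal_B v X W Splus Sminus xs ws"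
    and optP: "optimal_P v X wbar xo"
  shows "objective v xs \<ge> objective v xo"
proof -
  have "feasible_P X wbar xo" using optP unfolding optimal_P_def by blast
  then have "feasible_B X W Splus Sminus xo wbar"
    by (rule feasible_P_imp_feasible_B[OF X_bin W_poly wbar_W Sminus_sub Splus_ok Sminus_ok])
  with optB show ?thesis unfolding optimal_B_def by blast
qed

end
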